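(* Let $f\in C^2(\mathbb{R}^d)$ with $\nabla f$ globally $L$-Lipschitz, $h>0$, $\beta\ge0$, $c\le\gamma_k\le C$ ($0<c\le C$), and assume $\beta+\frac h2<\frac cL$. Let $(x_k)$ be generated by $y_k=x_k+\alpha_k(x_k-x_{k-1})-\beta_k(\nabla f(x_k)-\nabla f(x_{k-1}))$, $x_{k+1}=y_k-s_k\nabla f(x_k)$ ($k\ge1$), with $\alpha_k=\frac1{1+\gamma_kh}$, $\beta_k=\beta h\alpha_k$, $s_k=h^2\alpha_k$. Let $v_k=x_k-x_{k-1}$, $C_1=\frac1{h^2}+\frac{\beta L}h$ and $V_k=f(x_k)+\frac{C_1}2\|v_k\|^2$. Then for every $k\ge1$, $$V_{k+1}\le V_k-\delta\|v_{k+1}\|^2,\qquad \delta=\frac ch-\frac L2-\frac{\beta L}h>0.$$ *)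

theory Defs
  imports "HOL-Analysis.Analysis"
begin

definition C2_on_UNIV :: "('a::euclidean_space \<Rightarrow> real) \<Rightarrow> bool" where
  "C2_on_UNIV f \<longleftrightarrow> (\<exists>g D. (\<forall>x. (f has_derivative (\<lambda>v. g x \<bullet> v)) (at x)) \<and>
      (\<forall>x. (g has_derivative blinfun_apply (D x)) (at x)) \<and> continuous_on UNIV D)"

end

theory Submission
  imports Defs
begin

text \<open>The update rearranges to
  \<open>(1 + \<gamma>\<^sub>k h) v\<^sub>k\<^sub>+\<^sub>1 = v\<^sub>k - \<beta> h (\<nabla>f(x\<^sub>k) - \<nabla>f(x\<^sub>k\<^sub>-\<^sub>1)) - h\<^sup>2 \<nabla>f(x\<^sub>k)\<close>.
  Taking the inner product with \<open>v\<^sub>k\<^sub>+\<^sub>1\<close> and bounding both cross terms by Cauchy-Schwarz,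
  the Lipschitz bound and \<open>uv \<le> (u\<^sup>2 + v\<^sup>2)/2\<close> controls \<open>\<nabla>f(x\<^sub>k) \<bullet> v\<^sub>k\<^sub>+\<^sub>1\<close> by
  \<open>C\<^sub>1/2 (\<parallel>v\<^sub>k\<parallel>\<^sup>2 - \<parallel>v\<^sub>k\<^sub>+\<^sub>1\<parallel>\<^sup>2)\<close> minus a multiple of \<open>\<parallel>v\<^sub>k\<^sub>+\<^sub>1\<parallel>\<^sup>2\<close>; the descent
  lemma for \<open>L\<close>-smooth functions turns this into the decrease of \<open>V\<^sub>k\<close>.\<close>

lemma lipschitz_gradient_descent_lemma:
  fixes f :: "'a::real_inner \<Rightarrow> real" and g :: "'a \<Rightarrow> 'a"
  assumes grad: "\<And>z. (f has_derivative (\<lambda>v. g z \<bullet> v)) (at z)"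
    and Lip: "L-lipschitz_on UNIV g"
  shows "f y \<le> f x + g x \<bullet> (y - x) + L / 2 * (norm (y - x))\<^sup>2"
proof -
  define d where "d = y - x"
  define \<phi> where "\<phi> t = f (x + t *\<^sub>R d) - t * (g x \<bullet> d) - L / 2 * t\<^sup>2 * (norm d)\<^sup>2" for t
  have \<phi>_deriv: "(\<phi> has_real_derivative
      (g (x + t *\<^sub>R d) - g x) \<bullet> d - L * t * (norm d)\<^sup>2) (at t)" for t
  proof -
    have "((\<lambda>t. f (x + t *\<^sub>R d)) has_derivative (\<lambda>s. g (x + t *\<^sub>R d) \<bullet> (s *\<^sub>R d))) (at t)"
      by (rule has_derivative_compose[OF _ grad]) (auto intro!: derivative_eq_intros)
    then have "((\<lambda>t. f (x + t *\<^sub>R d)) has_real_derivative g (x + t *\<^sub>R d) \<bullet> d) (at t)"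
      by (simp add: has_field_derivative_def mult.commute[of _ "g (x + t *\<^sub>R d) \<bullet> d"])
    then show ?thesis
      unfolding \<phi>_def
      by (auto intro!: derivative_eq_intros simp: inner_diff_left power2_eq_square)
  qed
  have "\<phi> 1 \<le> \<phi> 0"
  proof (rule DERIV_nonpos_imp_nonincreasing[of 0 1 \<phi>])
    fix t :: real
    assume "0 \<le> t"
    have "(g (x + t *\<^sub>R d) - g x) \<bullet> d \<le> norm (g (x + t *\<^sub>R d) - g x) * norm d"
      by (rule norm_cauchy_schwarz)
    also have "\<dots> \<le> L * norm (t *\<^sub>R d) * norm d"
      using lipschitz_onD[OF Lip, of "x + t *\<^sub>R d" x] by (intro mult_right_mono) (auto simp: dist_norm)
    also have "\<dots> = L * t * (norm d)\<^sup>2"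
      using \<open>0 \<le> t\<close> by (simp add: power2_eq_square)
    finally show "\<exists>y. (\<phi> has_real_derivative y) (at t) \<and> y \<le> 0"
      using \<phi>_deriv[of t] by force
  qed simp
  then show ?thesis
    unfolding \<phi>_def d_def by simp
qed

lemma inner_le_half_sum_squares:
  fixes a b :: "'a::real_inner"
  shows "a \<bullet> b \<le> ((norm a)\<^sup>2 + (norm b)\<^sup>2) / 2"
  using norm_cauchy_schwarz[of a b] sum_squares_bound[of "norm a" "norm b"] by simp

lemma inertial_step_gradient_bound:
  fixes a b p G :: "'a::real_inner"
  assumes rec: "(1 + \<gamma> * h) *\<^sub>R b = a - (\<beta> * h) *\<^sub>R p - h\<^sup>2 *\<^sub>R G"
    and p_le: "norm p \<le> L * norm a"
    and "c \<le> \<gamma>" and "h > 0" and "\<beta> \<ge> 0" and "L \<ge> 0"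
  shows "G \<bullet> b \<le> (1 / h\<^sup>2 + \<beta> * L / h) / 2 * ((norm a)\<^sup>2 - (norm b)\<^sup>2)
                   - (c / h - \<beta> * L / h) * (norm b)\<^sup>2"
proof -
  define A where "A = (norm a)\<^sup>2"
  define B where "B = (norm b)\<^sup>2"
  have B_nonneg: "B \<ge> 0"
    by (simp add: B_def)
  have energy: "(1 + \<gamma> * h) * B = a \<bullet> b - \<beta> * h * (p \<bullet> b) - h\<^sup>2 * (G \<bullet> b)"
    using arg_cong[OF rec, of "\<lambda>v. v \<bullet> b"]
    by (simp add: B_def inner_diff_left power2_norm_eq_inner)
  have ab: "a \<bullet> b \<le> (A + B) / 2"
    unfolding A_def B_def by (rule inner_le_half_sum_squares)
  have "- (p \<bullet> b) \<le> norm p * norm b"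
    using norm_cauchy_schwarz[of "-p" b] by simp
  also have "\<dots> \<le> L * (norm a * norm b)"
    using p_le by (metis mult.assoc mult_right_mono norm_ge_zero)
  also have "\<dots> \<le> L * ((A + B) / 2)"
    unfolding A_def B_def
    using sum_squares_bound[of "norm a" "norm b"] \<open>L \<ge> 0\<close> by (intro mult_left_mono) auto
  finally have "\<beta> * h * (- (p \<bullet> b)) \<le> \<beta> * h * (L * ((A + B) / 2))"
    using \<open>h > 0\<close> \<open>\<beta> \<ge> 0\<close> by (intro mult_left_mono) auto
  moreover have "c * h * B \<le> \<gamma> * h * B"
    using \<open>c \<le> \<gamma>\<close> \<open>h > 0\<close> B_nonneg by (intro mult_right_mono) auto
  ultimately have "h\<^sup>2 * (G \<bullet> b) \<le> (1 + \<beta> * h * L) / 2 * (A - B) - (c * h - \<beta> * h * L) * B"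
    using energy ab by (simp add: algebra_simps add_divide_distrib diff_divide_distrib)
  also have "\<dots> = h\<^sup>2 * ((1 / h\<^sup>2 + \<beta> * L / h) / 2 * (A - B) - (c / h - \<beta> * L / h) * B)"
    using \<open>h > 0\<close> by (simp add: field_simps power2_eq_square)
  finally show ?thesis
    using \<open>h > 0\<close> by (simp add: A_def B_def)
qed

lemma inertial_step_energy_decrease:
  fixes f :: "'a::real_inner \<Rightarrow> real" and g :: "'a \<Rightarrow> 'a"
  assumes grad: "\<And>z. (f has_derivative (\<lambda>v. g z \<bullet> v)) (at z)"
    and Lip: "L-lipschitz_on UNIV g"
    and rec: "(1 + \<gamma> * h) *\<^sub>R (x\<^sub>2 - x\<^sub>1) = (x\<^sub>1 - x\<^sub>0) - (\<beta> * h) *\<^sub>R (g x\<^sub>1 - g x\<^sub>0) - h\<^sup>2 *\<^sub>R g x\<^sub>1"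
    and "c \<le> \<gamma>" and "h > 0" and "\<beta> \<ge> 0" and "L \<ge> 0"
  shows "f x\<^sub>2 + (1 / h\<^sup>2 + \<beta> * L / h) / 2 * (norm (x\<^sub>2 - x\<^sub>1))\<^sup>2
    \<le> f x\<^sub>1 + (1 / h\<^sup>2 + \<beta> * L / h) / 2 * (norm (x\<^sub>1 - x\<^sub>0))\<^sup>2
       - (c / h - L / 2 - \<beta> * L / h) * (norm (x\<^sub>2 - x\<^sub>1))\<^sup>2"
proof -
  have "norm (g x\<^sub>1 - g x\<^sub>0) \<le> L * norm (x\<^sub>1 - x\<^sub>0)"
    using lipschitz_onD[OF Lip] by (simp add: dist_norm)
  then have "g x\<^sub>1 \<bullet> (x\<^sub>2 - x\<^sub>1)
      \<le> (1 / h\<^sup>2 + \<beta> * L / h) / 2 * ((norm (x\<^sub>1 - x\<^sub>0))\<^sup>2 - (norm (x\<^sub>2 - x\<^sub>1))\<^sup>2)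
        - (c / h - \<beta> * L / h) * (norm (x\<^sub>2 - x\<^sub>1))\<^sup>2"
    using inertial_step_gradient_bound[OF rec] assms(4-) by blast
  moreover have "f x\<^sub>2 \<le> f x\<^sub>1 + g x\<^sub>1 \<bullet> (x\<^sub>2 - x\<^sub>1) + L / 2 * (norm (x\<^sub>2 - x\<^sub>1))\<^sup>2"
    by (rule lipschitz_gradient_descent_lemma[OF grad Lip])
  ultimately show ?thesis
    unfolding right_diff_distrib left_diff_distrib by linarith
qed

theorem mainTheorem7:
  fixes f :: "'a::euclidean_space \<Rightarrow> real"
    and g :: "'a \<Rightarrow> 'a"
    and x :: "nat \<Rightarrow> 'a"
    and \<gamma> :: "nat \<Rightarrow> real"
    and L h \<beta> c C :: real
  assumes C2: "C2_on_UNIV f"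
    and grad: "\<And>z. (f has_derivative (\<lambda>v. g z \<bullet> v)) (at z)"
    and Lip: "L-lipschitz_on UNIV g"
    and Lpos: "L > 0"
    and hpos: "h > 0"
    and beta: "\<beta> \<ge> 0"
    and cpos: "0 < c" and cC: "c \<le> C"
    and gam: "\<And>k. k \<ge> 1 \<Longrightarrow> c \<le> \<gamma> k \<and> \<gamma> k \<le> C"
    and step: "\<beta> + h / 2 < c / L"
    and iter: "\<And>k. k \<ge> 1 \<Longrightarrow>
       x (k + 1) = (x k + (1 / (1 + \<gamma> k * h)) *\<^sub>R (x k - x (k - 1))
                     - (\<beta> * h * (1 / (1 + \<gamma> k * h))) *\<^sub>R (g (x k) - g (x (k - 1))))
                   - (h\<^sup>2 * (1 / (1 + \<gamma> k * h))) *\<^sub>R g (x k)"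
  defines "C\<^sub>1 \<equiv> 1 / h\<^sup>2 + \<beta> * L / h"
    and "\<delta> \<equiv> c / h - L / 2 - \<beta> * L / h"
  shows "\<delta> > 0 \<and>
    (\<forall>k\<ge>1. f (x (k + 1)) + C\<^sub>1 / 2 * (norm (x (k + 1) - x k))\<^sup>2
       \<le> f (x k) + C\<^sub>1 / 2 * (norm (x k - x (k - 1)))\<^sup>2 - \<delta> * (norm (x (k + 1) - x k))\<^sup>2)"
proof -
  have "\<beta> * L + L * h / 2 < c"
    using step Lpos by (simp add: field_simps)
  then have "(\<beta> * L + L * h / 2) / h < c / h"
    using hpos by (simp add: divide_strict_right_mono)
  then have "\<delta> > 0"
    unfolding \<delta>_def using hpos by (simp add: field_simps)
  moreover have "f (x (k + 1)) + C\<^sub>1 / 2 * (norm (x (k + 1) - x k))\<^sup>2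
       \<le> f (x k) + C\<^sub>1 / 2 * (norm (x k - x (k - 1)))\<^sup>2 - \<delta> * (norm (x (k + 1) - x k))\<^sup>2"
    if "k \<ge> 1" for k
  proof -
    have "c \<le> \<gamma> k"
      using gam[OF \<open>k \<ge> 1\<close>] by simp
    then have "1 + \<gamma> k * h > 0"
      using cpos hpos by (simp add: add_pos_nonneg)
    moreover have "x (k + 1) - x k = (1 / (1 + \<gamma> k * h)) *\<^sub>R
        ((x k - x (k - 1)) - (\<beta> * h) *\<^sub>R (g (x k) - g (x (k - 1))) - h\<^sup>2 *\<^sub>R g (x k))"
      using iter[OF \<open>k \<ge> 1\<close>] by (simp add: scaleR_diff_right)
    ultimately have "(1 + \<gamma> k * h) *\<^sub>R (x (k + 1) - x k) =
        (x k - x (k - 1)) - (\<beta> * h) *\<^sub>R (g (x k) - g (x (k - 1))) - h\<^sup>2 *\<^sub>R g (x k)"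
      by simp
    then show ?thesis
      unfolding C\<^sub>1_def \<delta>_def
      using inertial_step_energy_decrease[OF grad Lip] \<open>c \<le> \<gamma> k\<close> hpos beta Lpos by simp
  qed
  ultimately show ?thesis
    by blast
qed

end
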